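(* Let $(X_n,q_{n,n+1})_{n\in\mathbb{N}}$ be an inverse sequence of finite $T_0$ topological spaces and continuous maps. For each $n$ let $C_n$ be a core of $X_n$, $i_n:C_n\to X_n$ the inclusion, and $r_n:X_n\to C_n$ a retraction with $r_n\circ i_n=\mathrm{id}_{C_n}$ and $i_n\circ r_n$ homotopic to $\mathrm{id}_{X_n}$. Then $(X_n,q_{n,n+1})$ is isomorphic in pro-$HTop$ to the inverse sequence $(C_n, r_n\circ q_{n,n+1}\circ i_{n+1})$ (the core of $(X_n,q_{n,n+1})$).
   Context: Finite $T_0$ spaces are identified with finite posets ($x\le y$ iff $U_x\subseteq U_y$, where $U_x$ is the minimal open set containing $x$); let $F_x=\{y\mid y\ge x\}$. A point $x$ is a down (resp. up) beat point if $U_x\setminus\{x\}$ has a maximum (resp. $F_x\setminus\{x\}$ has a minimum). A core of a finite space $X$ is a subspace obtained by removing beat points one at a time until none remain. $HTop$ is the homotopy category of topological spaces and pro-$HTop$ its pro-category of inverse systems (morphisms of inverse sequences represented by an increasing index map $f:\mathbb{N}\to\mathbb{N}$ and maps $f_n:X_{f(n)}\to Y_n$ commuting up to homotopy with bonding maps, modulo the usual equivalence). *)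

theory Defs
  imports "HOL-Analysis.Analysis"
begin

text \<open>Specialization order: x \<le> y iff U_x \<subseteq> U_y, i.e. every open set containing y contains x.\<close>
definition spec_le :: "'a topology \<Rightarrow> 'a \<Rightarrow> 'a \<Rightarrow> bool" where
  "spec_le X x y \<longleftrightarrow> x \<in> topspace X \<and> y \<in> topspace X \<and>
     (\<forall>U. openin X U \<and> y \<in> U \<longrightarrow> x \<in> U)"

definition down_beat_point :: "'a topology \<Rightarrow> 'a \<Rightarrow> bool" where
  "down_beat_point X x \<longleftrightarrow> x \<in> topspace X \<and>
     (\<exists>m\<in>{y. spec_le X y x} - {x}. \<forall>y\<in>{y. spec_le X y x} - {x}. spec_le X y m)"

definition up_beat_point :: "'a topology \<Rightarrow> 'a \<Rightarrow> bool" where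
  "up_beat_point X x \<longleftrightarrow> x \<in> topspace X \<and>
     (\<exists>m\<in>{y. spec_le X x y} - {x}. \<forall>y\<in>{y. spec_le X x y} - {x}. spec_le X m y)"

definition beat_point :: "'a topology \<Rightarrow> 'a \<Rightarrow> bool" where
  "beat_point X x \<longleftrightarrow> down_beat_point X x \<or> up_beat_point X x"

definition beat_step :: "'a topology \<Rightarrow> 'a set \<Rightarrow> 'a set \<Rightarrow> bool" where
  "beat_step X A B \<longleftrightarrow> (\<exists>x. beat_point (subtopology X A) x \<and> B = A - {x})"

definition is_core :: "'a topology \<Rightarrow> 'a set \<Rightarrow> bool" where
  "is_core X C \<longleftrightarrow> (beat_step X)\<^sup>*\<^sup>* (topspace X) C \<and>
     (\<nexists>x. beat_point (subtopology X C) x)"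

text \<open>Composite bonding map X_{m+k} \<rightarrow> X_m, where q n : X_{n+1} \<rightarrow> X_n.\<close>
fun bond_k :: "(nat \<Rightarrow> 'a \<Rightarrow> 'a) \<Rightarrow> nat \<Rightarrow> nat \<Rightarrow> 'a \<Rightarrow> 'a" where
  "bond_k q m 0 = id"
| "bond_k q m (Suc k) = bond_k q m k \<circ> q (m + k)"

text \<open>q_{m,m'} : X_{m'} \<rightarrow> X_m for m \<le> m'.\<close>
definition bond :: "(nat \<Rightarrow> 'a \<Rightarrow> 'a) \<Rightarrow> nat \<Rightarrow> nat \<Rightarrow> 'a \<Rightarrow> 'a" where
  "bond q m m' = bond_k q m (m' - m)"

definition htpc :: "'a topology \<Rightarrow> 'b topology \<Rightarrow> ('a \<Rightarrow> 'b) \<Rightarrow> ('a \<Rightarrow> 'b) \<Rightarrow> bool" where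
  "htpc X Y f g \<longleftrightarrow> homotopic_with (\<lambda>_. True) X Y f g"

text \<open>A morphism of inverse sequences (X,p) \<rightarrow> (Y,q) in pro-HTop, represented by an
  increasing index map f and maps h n : X_{f n} \<rightarrow> Y_n commuting up to homotopy.\<close>
definition pro_morph ::
  "(nat \<Rightarrow> 'a topology) \<Rightarrow> (nat \<Rightarrow> 'a \<Rightarrow> 'a) \<Rightarrow> (nat \<Rightarrow> 'b topology) \<Rightarrow> (nat \<Rightarrow> 'b \<Rightarrow> 'b)
    \<Rightarrow> (nat \<Rightarrow> nat) \<Rightarrow> (nat \<Rightarrow> 'a \<Rightarrow> 'b) \<Rightarrow> bool" where
  "pro_morph X p Y q f h \<longleftrightarrow> mono f \<and>
     (\<forall>n. continuous_map (X (f n)) (Y n) (h n)) \<and>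
     (\<forall>n. htpc (X (f (Suc n))) (Y n) (h n \<circ> bond p (f n) (f (Suc n))) (q n \<circ> h (Suc n)))"

definition pro_equiv ::
  "(nat \<Rightarrow> 'a topology) \<Rightarrow> (nat \<Rightarrow> 'a \<Rightarrow> 'a) \<Rightarrow> (nat \<Rightarrow> 'b topology)
    \<Rightarrow> (nat \<Rightarrow> nat) \<Rightarrow> (nat \<Rightarrow> 'a \<Rightarrow> 'b) \<Rightarrow> (nat \<Rightarrow> nat) \<Rightarrow> (nat \<Rightarrow> 'a \<Rightarrow> 'b) \<Rightarrow> bool" where
  "pro_equiv X p Y f h g k \<longleftrightarrow>
     (\<forall>n. \<exists>m. f n \<le> m \<and> g n \<le> m \<and>
        htpc (X m) (Y n) (h n \<circ> bond p (f n) m) (k n \<circ> bond p (g n) m))"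

text \<open>Composite of (f,h):X\<rightarrow>Y and (g,k):Y\<rightarrow>X
  is (f \<circ> g, \<lambda>n. k n \<circ> h (g n)).\<close>
definition pro_iso ::
  "(nat \<Rightarrow> 'a topology) \<Rightarrow> (nat \<Rightarrow> 'a \<Rightarrow> 'a) \<Rightarrow> (nat \<Rightarrow> 'b topology) \<Rightarrow> (nat \<Rightarrow> 'b \<Rightarrow> 'b) \<Rightarrow> bool" where
  "pro_iso X p Y q \<longleftrightarrow>
    (\<exists>f h g k. pro_morph X p Y q f h \<and> pro_morph Y q X p g k \<and>
       pro_equiv X p X (f \<circ> g) (\<lambda>n. k n \<circ> h (g n)) id (\<lambda>_. id) \<and>
       pro_equiv Y q Y (g \<circ> f) (\<lambda>n. h n \<circ> k (f n)) id (\<lambda>_. id))"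

end

theory Submission
  imports Defs
begin

text \<open>The retraction \<open>r\<^sub>n\<close> and the inclusion \<open>i\<^sub>n\<close> are mutually inverse homotopy
  equivalences \<open>X\<^sub>n \<simeq> C\<^sub>n\<close>, and \<open>r\<^sub>n\<close> commutes with the bonding maps up to homotopy because
  \<open>i\<^sub>n\<^sub>+\<^sub>1 \<circ> r\<^sub>n\<^sub>+\<^sub>1 \<simeq> id\<close>.  A level morphism of inverse sequences that is a homotopy equivalence
  at every level is an isomorphism in pro-HTop: the levelwise homotopy inverses commute with
  the bonding maps up to homotopy as well, and both composites are levelwise homotopic to
  the identity.  Finiteness, the T0 property and minimality of the cores only serve to
  produce \<open>r\<^sub>n\<close>.\<close>

declare homotopic_with_trans [trans]

lemma bond_self [simp]: "bond q n n = id"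
  by (simp add: bond_def)

lemma bond_Suc [simp]: "bond q n (Suc n) = q n"
  by (simp add: bond_def)

lemma pro_morph_levelwise:
  assumes "\<And>n. continuous_map (X n) (Y n) (h n)"
    and "\<And>n. homotopic_with (\<lambda>_. True) (X (Suc n)) (Y n) (h n \<circ> p n) (q n \<circ> h (Suc n))"
  shows "pro_morph X p Y q id h"
  using assms by (simp add: pro_morph_def htpc_def mono_def)

lemma pro_equiv_levelwise:
  assumes "\<And>n. homotopic_with (\<lambda>_. True) (X n) (Y n) (h n) (k n)"
  shows "pro_equiv X p Y id h id k"
  using assms unfolding pro_equiv_def htpc_def by auto

lemma homotopy_inverses_commute:
  assumes h: "continuous_map X Y h" and k: "continuous_map Y X k"
    and k': "continuous_map Y' X' k'"
    and p: "continuous_map X' X p" and q: "continuous_map Y' Y q"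
    and kh: "homotopic_with (\<lambda>_. True) X X (k \<circ> h) id"
    and hk': "homotopic_with (\<lambda>_. True) Y' Y' (h' \<circ> k') id"
    and comm: "homotopic_with (\<lambda>_. True) X' Y (h \<circ> p) (q \<circ> h')"
  shows "homotopic_with (\<lambda>_. True) Y' X (k \<circ> q) (p \<circ> k')"
proof -
  have kq: "continuous_map Y' X (k \<circ> q)"
    using q k by (rule continuous_map_compose)
  have "homotopic_with (\<lambda>_. True) Y' X (k \<circ> q) ((k \<circ> q) \<circ> (h' \<circ> k'))"
    using homotopic_with_compose_continuous_map_left [OF hk' kq]
    by (simp add: homotopic_with_sym)
  also have "(k \<circ> q) \<circ> (h' \<circ> k') = k \<circ> (q \<circ> h') \<circ> k'"
    by (simp add: o_assoc)
  also have "homotopic_with (\<lambda>_. True) Y' X \<dots> (k \<circ> (h \<circ> p) \<circ> k')"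
    using homotopic_with_compose_continuous_map_right
      [OF homotopic_with_compose_continuous_map_left [OF comm k] k']
    by (simp add: homotopic_with_sym)
  also have "k \<circ> (h \<circ> p) \<circ> k' = (k \<circ> h) \<circ> (p \<circ> k')"
    by (simp add: o_assoc)
  also have "homotopic_with (\<lambda>_. True) Y' X \<dots> (id \<circ> (p \<circ> k'))"
    using kh by (rule homotopic_with_compose_continuous_map_right)
      (use k' p in \<open>auto intro: continuous_map_compose\<close>)
  finally show ?thesis
    by (simp only: id_o)
qed

theorem pro_iso_levelwise_homotopy_equivalence:
  assumes p: "\<And>n. continuous_map (X (Suc n)) (X n) (p n)"
    and q: "\<And>n. continuous_map (Y (Suc n)) (Y n) (q n)"
    and h: "\<And>n. continuous_map (X n) (Y n) (h n)"
    and k: "\<And>n. continuous_map (Y n) (X n) (k n)"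
    and kh: "\<And>n. homotopic_with (\<lambda>_. True) (X n) (X n) (k n \<circ> h n) id"
    and hk: "\<And>n. homotopic_with (\<lambda>_. True) (Y n) (Y n) (h n \<circ> k n) id"
    and comm: "\<And>n. homotopic_with (\<lambda>_. True) (X (Suc n)) (Y n) (h n \<circ> p n) (q n \<circ> h (Suc n))"
  shows "pro_iso X p Y q"
proof -
  have "pro_morph X p Y q id h"
    using h comm by (rule pro_morph_levelwise)
  moreover have "pro_morph Y q X p id k"
    using k homotopy_inverses_commute [OF h k k p q kh hk comm]
    by (rule pro_morph_levelwise)
  moreover have "pro_equiv X p X (id \<circ> id) (\<lambda>n. k n \<circ> h (id n)) id (\<lambda>_. id)"
    using pro_equiv_levelwise [OF kh] by simp
  moreover have "pro_equiv Y q Y (id \<circ> id) (\<lambda>n. h n \<circ> k (id n)) id (\<lambda>_. id)"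
    using pro_equiv_levelwise [OF hk] by simp
  ultimately show ?thesis
    unfolding pro_iso_def by blast
qed

theorem theorem3p5:
  fixes X :: "nat \<Rightarrow> 'a topology" and q :: "nat \<Rightarrow> 'a \<Rightarrow> 'a"
    and C :: "nat \<Rightarrow> 'a set" and r :: "nat \<Rightarrow> 'a \<Rightarrow> 'a"
  assumes fin: "\<And>n. finite (topspace (X n))"
    and T0: "\<And>n. t0_space (X n)"
    and q_cont: "\<And>n. continuous_map (X (Suc n)) (X n) (q n)"
    and core: "\<And>n. is_core (X n) (C n)"
    and r_cont: "\<And>n. continuous_map (X n) (subtopology (X n) (C n)) (r n)"
    and r_retr: "\<And>n x. x \<in> C n \<Longrightarrow> r n x = x"
    and r_htpy: "\<And>n. homotopic_with (\<lambda>_. True) (X n) (X n) (r n) id"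
  shows "pro_iso X q (\<lambda>n. subtopology (X n) (C n)) (\<lambda>n. r n \<circ> q n)"
proof (rule pro_iso_levelwise_homotopy_equivalence [where h = r and k = "\<lambda>_. id"])
  let ?C = "\<lambda>n. subtopology (X n) (C n)"
  fix n
  have rq: "continuous_map (X (Suc n)) (?C n) (r n \<circ> q n)"
    using q_cont r_cont by (rule continuous_map_compose)
  show "continuous_map (?C (Suc n)) (?C n) (r n \<circ> q n)"
    using rq by (rule continuous_map_from_subtopology)
  show "continuous_map (?C n) (X n) id"
    by (rule continuous_map_id_subt)
  show "homotopic_with (\<lambda>_. True) (?C n) (?C n) (r n \<circ> id) id"
    by (rule homotopic_with_equal) (auto simp: r_retr intro: continuous_map_from_subtopology r_cont)
  show "homotopic_with (\<lambda>_. True) (X (Suc n)) (?C n) (r n \<circ> q n) (r n \<circ> q n \<circ> r (Suc n))"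
    using homotopic_with_compose_continuous_map_left [OF r_htpy rq]
    by (simp add: homotopic_with_sym)
  show "continuous_map (X (Suc n)) (X n) (q n)"
    by (rule q_cont)
  show "continuous_map (X n) (?C n) (r n)"
    by (rule r_cont)
  show "homotopic_with (\<lambda>_. True) (X n) (X n) (id \<circ> r n) id"
    using r_htpy by simp
qed

end
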